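(* Let $X$ be a Banach space which has weak quasi-normal structure but does not have weak normal structure. Then there exist a nontrivial weakly compact convex subset $K$ of $X$ and a mapping $T:K\to K$ such that (i) $T$ is not a Kannan mapping; (ii) $T$ is an orbitally Kannan mapping which diminishes the radius of orbits; (iii) $T$ has no fixed point.
   Context: Nontrivial means containing more than one point. For $x\in X$, $A\subseteq X$: $r_x(A)=\sup\{\|x-y\|:y\in A\}$, $\delta(A)$ the diameter; $O_T(x)=\{x,Tx,T^2x,\dots\}$. $T$ is Kannan if $\|Tx-Ty\|\le\frac12(\|x-Tx\|+\|y-Ty\|)$ for all $x,y$; orbitally Kannan if $\|Tx-Ty\|\le\frac12(r_x(O_T(x))+r_y(O_T(y)))$ for all $x,y$; diminishes the radius of orbits if $r_{Tx}(O_T(Tx))\le r_x(O_T(x))$ for all $x$. $X$ has weak normal structure if every nontrivial weakly compact convex $K\subseteq X$ satisfies: for every closed convex $K_0\subseteq K$ with $\delta(K_0)>0$ there is $x_0\in K_0$ with $r_{x_0}(K_0)<\delta(K_0)$. $X$ has weak quasi-normal structure if every nontrivial weakly compact convex $C\subseteq X$ satisfies: for every nontrivial closed convex $K_0\subseteq C$ there is $x_0\in K_0$ with $\|x_0-y\|<\delta(K_0)$ for all $y\in K_0$. *)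

theory Defs
  imports "HOL-Analysis.Analysis"
begin

definition weak_topology :: "'a::real_normed_vector topology" where
  "weak_topology = topology_generated_by
     {{x. f x \<in> U} | (f :: 'a \<Rightarrow> real) U. bounded_linear f \<and> open U}"

definition weakly_compact :: "'a::real_normed_vector set \<Rightarrow> bool" where
  "weakly_compact K \<longleftrightarrow> compactin weak_topology K"

definition nontrivial :: "'a set \<Rightarrow> bool" where
  "nontrivial A \<longleftrightarrow> (\<exists>x\<in>A. \<exists>y\<in>A. x \<noteq> y)"

definition rad :: "'a::real_normed_vector \<Rightarrow> 'a set \<Rightarrow> real" where
  "rad x A = (SUP y\<in>A. norm (x - y))"

definition orbit :: "('a \<Rightarrow> 'a) \<Rightarrow> 'a \<Rightarrow> 'a set" where
  "orbit T x = range (\<lambda>n. (T ^^ n) x)"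

definition kannan :: "'a::real_normed_vector set \<Rightarrow> ('a \<Rightarrow> 'a) \<Rightarrow> bool" where
  "kannan K T \<longleftrightarrow> (\<forall>x\<in>K. \<forall>y\<in>K.
     norm (T x - T y) \<le> (1/2) * (norm (x - T x) + norm (y - T y)))"

definition orbitally_kannan :: "'a::real_normed_vector set \<Rightarrow> ('a \<Rightarrow> 'a) \<Rightarrow> bool" where
  "orbitally_kannan K T \<longleftrightarrow> (\<forall>x\<in>K. \<forall>y\<in>K.
     norm (T x - T y) \<le> (1/2) * (rad x (orbit T x) + rad y (orbit T y)))"

definition diminishes_radius_of_orbits :: "'a::real_normed_vector set \<Rightarrow> ('a \<Rightarrow> 'a) \<Rightarrow> bool" where
  "diminishes_radius_of_orbits K T \<longleftrightarrow>
     (\<forall>x\<in>K. rad (T x) (orbit T (T x)) \<le> rad x (orbit T x))"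

definition weak_normal_structure :: "'a::real_normed_vector itself \<Rightarrow> bool" where
  "weak_normal_structure _ \<longleftrightarrow>
     (\<forall>K :: 'a set. nontrivial K \<and> weakly_compact K \<and> convex K \<longrightarrow>
        (\<forall>K0. K0 \<subseteq> K \<and> closed K0 \<and> convex K0 \<and> diameter K0 > 0 \<longrightarrow>
           (\<exists>x0\<in>K0. rad x0 K0 < diameter K0)))"

definition weak_quasi_normal_structure :: "'a::real_normed_vector itself \<Rightarrow> bool" where
  "weak_quasi_normal_structure _ \<longleftrightarrow>
     (\<forall>C :: 'a set. nontrivial C \<and> weakly_compact C \<and> convex C \<longrightarrow>
        (\<forall>K0. K0 \<subseteq> C \<and> nontrivial K0 \<and> closed K0 \<and> convex K0 \<longrightarrow>
           (\<exists>x0\<in>K0. \<forall>y\<in>K0. norm (x0 - y) < diameter K0)))"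

end

theory Submission
  imports Defs
begin

(* Failure of weak normal structure provides a closed convex set K0 of diameter \<delta> > 0 inside a
   weakly compact set in which every point is diametral. Following Brodskii and Milman, K0
   contains a sequence s each of whose terms is at distance almost \<delta> from the convex hull of
   the previous ones, so every point of the closed convex hull C of s is almost diametral to
   every tail of s. The shift s n \<mapsto> s (n + 1), sending all other points to s 0, maps C into the
   range of s, and every orbit contains a tail of s; hence all orbits have radius exactly \<delta>,
   which makes the shift orbitally Kannan and radius preserving. It has no fixed point since s is
   injective, and the Kannan inequality fails at the midpoint of s 0 and s 1, which is sent to
   s 0. The set C is weakly compact by Mazur's theorem, and K0 is bounded by the uniform
   boundedness principle; both rest on the Hahn-Banach theorem. *)

section \<open>The Hahn-Banach theorem\<close>

definition sublinear :: "('a::real_vector \<Rightarrow> real) \<Rightarrow> bool" where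
  "sublinear p \<longleftrightarrow> (\<forall>x y. p (x + y) \<le> p x + p y) \<and> (\<forall>c x. 0 \<le> c \<longrightarrow> p (c *\<^sub>R x) \<le> c * p x)"

lemma sublinear_norm: "sublinear norm"
  unfolding sublinear_def by (simp add: norm_triangle_ineq)

text \<open>Linear functionals dominated by p on a subspace are handled through their graphs,
  subspaces of X \<times> \<real>, so that chains can simply be united in Zorn's lemma.\<close>
definition dominated_graph :: "('a::real_vector \<Rightarrow> real) \<Rightarrow> ('a \<times> real) set \<Rightarrow> bool" where
  "dominated_graph p G \<longleftrightarrow> subspace G \<and> (\<forall>(x, a)\<in>G. a \<le> p x)"

lemma sublinear_zero:
  assumes "sublinear p"
  shows "p 0 = 0"
proof -
  have hom: "p (c *\<^sub>R x) \<le> c * p x" if "0 \<le> c" for c x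
    using assms that by (simp add: sublinear_def)
  show ?thesis
    using hom[of 0 0] hom[of 2 0] by simp
qed

lemma dominated_graph_unique:
  assumes p: "sublinear p" and G: "dominated_graph p G" and "(x, a) \<in> G" "(x, b) \<in> G"
  shows "a = b"
proof -
  have "(0, a - b) \<in> G" "(0, b - a) \<in> G"
    using assms(3,4) G subspace_diff[of G "(x, a)" "(x, b)"] subspace_diff[of G "(x, b)" "(x, a)"]
    by (auto simp: dominated_graph_def)
  then have "a - b \<le> p 0" "b - a \<le> p 0"
    using G unfolding dominated_graph_def by auto
  then show ?thesis
    using sublinear_zero[OF p] by linarith
qed

lemma subspace_Union_chain:
  assumes "\<C> \<noteq> {}" "\<And>S. S \<in> \<C> \<Longrightarrow> subspace S" "\<And>S T. S \<in> \<C> \<Longrightarrow> T \<in> \<C> \<Longrightarrow> S \<subseteq> T \<or> T \<subseteq> S"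
  shows "subspace (\<Union>\<C>)"
  unfolding subspace_def
proof (intro conjI ballI allI)
  show "0 \<in> \<Union>\<C>"
    using assms(1,2) subspace_0 by blast
next
  fix x y assume "x \<in> \<Union>\<C>" "y \<in> \<Union>\<C>"
  then obtain S T where "S \<in> \<C>" "T \<in> \<C>" "x \<in> S" "y \<in> T" by blast
  with assms(2) assms(3)[of S T] show "x + y \<in> \<Union>\<C>"
    by (metis UnionI subsetD subspace_add)
next
  fix c x assume "x \<in> \<Union>\<C>"
  then show "c *\<^sub>R x \<in> \<Union>\<C>"
    using assms(2) subspace_scale by blast
qed

text \<open>The value at y is squeezed between the bounds that domination at x - y and x' + y
  imposes; they are compatible by subadditivity of p.\<close>
lemma dominated_graph_extension_value:
  assumes p: "sublinear p" and G: "dominated_graph p G"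
  shows "\<exists>c. \<forall>(x, a)\<in>G. a - p (x - y) \<le> c \<and> c \<le> p (x + y) - a"
proof -
  have le: "a - p (x - y) \<le> p (x' + y) - a'" if "(x, a) \<in> G" "(x', a') \<in> G" for x a x' a'
  proof -
    have "(x + x', a + a') \<in> G"
      using G that subspace_add[of G "(x, a)" "(x', a')"] by (simp add: dominated_graph_def)
    then have "a + a' \<le> p ((x - y) + (x' + y))"
      using G by (auto simp: dominated_graph_def)
    also have "\<dots> \<le> p (x - y) + p (x' + y)"
      using p unfolding sublinear_def by blast
    finally show ?thesis by simp
  qed
  define L where "L = {a - p (x - y) | x a. (x, a) \<in> G}"
  have "(0, 0) \<in> G"
    using G subspace_0[of G] by (simp add: dominated_graph_def zero_prod_def)
  then have "0 - p (0 - y) \<in> L" "\<forall>l\<in>L. l \<le> p (0 + y) - 0"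
    using le unfolding L_def by blast+
  then have "L \<noteq> {}" "bdd_above L"
    unfolding bdd_above_def by blast+
  then have "\<forall>(x, a)\<in>G. a - p (x - y) \<le> Sup L \<and> Sup L \<le> p (x + y) - a"
    using le unfolding L_def by (blast intro: cSup_upper cSup_least)
  then show ?thesis by blast
qed

lemma dominated_graph_span_insert:
  assumes p: "sublinear p" and G: "dominated_graph p G"
    and c: "\<And>x a. (x, a) \<in> G \<Longrightarrow> a - p (x - y) \<le> c \<and> c \<le> p (x + y) - a"
  shows "dominated_graph p (span (insert (y, c) G))"
proof -
  have "b \<le> p z" if zb: "(z, b) \<in> span (insert (y, c) G)" for z b
  proof -
    have "span G = G"
      using G by (simp add: dominated_graph_def span_eq_iff)
    then obtain t where "(z, b) - t *\<^sub>R (y, c) \<in> G"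
      using zb unfolding span_insert by blast
    then have "(z - t *\<^sub>R y, b - t * c) \<in> G"
      by simp
    then have scaled: "(r *\<^sub>R z - (r * t) *\<^sub>R y, r * b - (r * t) * c) \<in> G" for r
      using G subspace_scale[of G "(z - t *\<^sub>R y, b - t * c)" r]
      by (simp add: dominated_graph_def algebra_simps)
    have "\<exists>r>0. r * b \<le> p (r *\<^sub>R z)"
    proof (cases "t = 0")
      case True
      then have "(z, b) \<in> G"
        using scaled[of 1] by simp
      then have "1 * b \<le> p (1 *\<^sub>R z)"
        using G by (auto simp: dominated_graph_def)
      then show ?thesis
        using zero_less_one by blast
    next
      case False
      define r where "r = inverse \<bar>t\<bar>"
      have r: "r > 0" "r * t = sgn t"
        using False by (auto simp: r_def sgn_if)
      consider "t > 0" | "t < 0"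
        using False by linarith
      then have "r * b \<le> p (r *\<^sub>R z)"
      proof cases
        case 1
        then show ?thesis
          using c[OF scaled[of r]] r by simp
      next
        case 2
        then show ?thesis
          using c[OF scaled[of r]] r by simp
      qed
      then show ?thesis
        using r by blast
    qed
    then obtain r where "r > 0" "r * b \<le> p (r *\<^sub>R z)"
      by blast
    moreover have "p (r *\<^sub>R z) \<le> r * p z"
      using p \<open>r > 0\<close> by (simp add: sublinear_def)
    ultimately show ?thesis
      by (meson mult_le_cancel_left_pos order_trans)
  qed
  then show ?thesis
    unfolding dominated_graph_def using subspace_span by fast
qed

lemma dominated_graph_extend:
  assumes "sublinear p" "dominated_graph p G"
  shows "\<exists>c. dominated_graph p (span (insert (y, c) G))"
  using dominated_graph_extension_value[OF assms, of y] dominated_graph_span_insert[OF assms]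
  by fast

lemma maximal_dominated_graph_exists:
  assumes "dominated_graph p G0"
  obtains M where "dominated_graph p M" "G0 \<subseteq> M"
    "\<And>G. dominated_graph p G \<Longrightarrow> M \<subseteq> G \<Longrightarrow> G = M"
proof -
  define \<A> where "\<A> = {G. dominated_graph p G \<and> G0 \<subseteq> G}"
  have "\<exists>M\<in>\<A>. \<forall>G\<in>\<A>. M \<subseteq> G \<longrightarrow> G = M"
  proof (rule subset_Zorn_nonempty)
    show "\<A> \<noteq> {}"
      using assms unfolding \<A>_def by blast
  next
    fix \<C> assume "\<C> \<noteq> {}" and "subset.chain \<A> \<C>"
    then have "\<C> \<subseteq> \<A>" "\<And>S T. S \<in> \<C> \<Longrightarrow> T \<in> \<C> \<Longrightarrow> S \<subseteq> T \<or> T \<subseteq> S"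
      by (auto simp: subset_chain_def)
    with \<open>\<C> \<noteq> {}\<close> have "subspace (\<Union>\<C>)"
      by (intro subspace_Union_chain) (auto simp: \<A>_def dominated_graph_def)
    with \<open>\<C> \<subseteq> \<A>\<close> \<open>\<C> \<noteq> {}\<close> show "\<Union>\<C> \<in> \<A>"
      unfolding \<A>_def dominated_graph_def by blast
  qed
  then obtain M where "M \<in> \<A>" and maximal: "\<And>G. G \<in> \<A> \<Longrightarrow> M \<subseteq> G \<Longrightarrow> G = M"
    by blast
  then have "dominated_graph p M" "G0 \<subseteq> M"
    by (simp_all add: \<A>_def)
  moreover have "G = M" if "dominated_graph p G" "M \<subseteq> G" for G
    using maximal[of G] that \<open>G0 \<subseteq> M\<close> by (simp add: \<A>_def)
  ultimately show ?thesis
    using that by blast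
qed

lemma maximal_dominated_graph_total:
  assumes p: "sublinear p" and M: "dominated_graph p M"
    and maximal: "\<And>G. dominated_graph p G \<Longrightarrow> M \<subseteq> G \<Longrightarrow> G = M"
  shows "\<exists>a. (x, a) \<in> M"
proof -
  obtain c where "dominated_graph p (span (insert (x, c) M))"
    using dominated_graph_extend[OF p M] by blast
  moreover have "M \<subseteq> span (insert (x, c) M)"
    using span_superset[of "insert (x, c) M"] by blast
  ultimately have "span (insert (x, c) M) = M"
    by (rule maximal)
  then show ?thesis
    using span_superset[of "insert (x, c) M"] by blast
qed

theorem hahn_banach:
  assumes p: "sublinear p" and G0: "dominated_graph p G0"
  shows "\<exists>F. linear F \<and> (\<forall>x. F x \<le> p x) \<and> (\<forall>(x, a)\<in>G0. F x = a)"
proof -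
  obtain M where M: "dominated_graph p M" "G0 \<subseteq> M"
    and maximal: "\<And>G. dominated_graph p G \<Longrightarrow> M \<subseteq> G \<Longrightarrow> G = M"
    using maximal_dominated_graph_exists[OF G0] by blast
  define F where "F x = (THE a. (x, a) \<in> M)" for x
  have graph: "(x, a) \<in> M \<longleftrightarrow> F x = a" for x a
  proof -
    obtain b where b: "(x, b) \<in> M"
      using maximal_dominated_graph_total[OF p M(1) maximal] by blast
    have uniq: "a' = b" if "(x, a') \<in> M" for a'
      using dominated_graph_unique[OF p M(1) that b] .
    have "F x = b"
      unfolding F_def using b uniq by (rule the_equality)
    then show ?thesis
      using b uniq by blast
  qed
  have subM: "subspace M"
    using M(1) by (simp add: dominated_graph_def)
  have "linear F"
  proof (rule linearI)
    show "F (x + y) = F x + F y" for x y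
      using subspace_add[OF subM, of "(x, F x)" "(y, F y)"] graph by simp
    show "F (r *\<^sub>R x) = r *\<^sub>R F x" for r x
      using subspace_scale[OF subM, of "(x, F x)" r] graph by simp
  qed
  moreover have "F x \<le> p x" for x
    using M(1) graph[of x "F x"] by (auto simp: dominated_graph_def)
  ultimately show ?thesis
    using M(2) graph by blast
qed

lemma linear_le_norm_imp_bounded_linear:
  assumes F: "linear F" and le: "\<And>v. F v \<le> norm v"
  shows "bounded_linear F" and "\<bar>F v\<bar> \<le> norm v"
proof -
  have abs_le: "\<bar>F v\<bar> \<le> norm v" for v
    using le[of v] le[of "- v"] linear_neg[OF F, of v] by simp
  then show "\<bar>F v\<bar> \<le> norm v" .
  show "bounded_linear F"
  proof (rule bounded_linear_intro[where K = 1])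
    show "F (u + v) = F u + F v" for u v
      using linear_add[OF F] .
    show "F (r *\<^sub>R v) = r *\<^sub>R F v" for r v
      using linear_scale[OF F] .
    show "norm (F v) \<le> norm v * 1" for v
      using abs_le by simp
  qed
qed

lemma norming_functional:
  fixes x :: "'a::real_normed_vector"
  shows "\<exists>F. bounded_linear F \<and> (\<forall>v. \<bar>F v\<bar> \<le> norm v) \<and> F x = norm x"
proof -
  have "a \<le> norm v" if va: "(v, a) \<in> span {(x, norm x)}" for v a
  proof -
    obtain t where "v = t *\<^sub>R x" "a = t * norm x"
      using va by (auto simp: span_singleton)
    then show ?thesis
      by (simp add: mult_right_mono)
  qed
  then have "dominated_graph norm (span {(x, norm x)})"
    unfolding dominated_graph_def using subspace_span by blast
  then obtain F where F: "linear F" "\<And>v. F v \<le> norm v"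
    and graph: "\<forall>(v, a)\<in>span {(x, norm x)}. F v = a"
    using hahn_banach[OF sublinear_norm] by blast
  have "F x = norm x"
    using graph span_base[of "(x, norm x)" "{(x, norm x)}"] by auto
  then show ?thesis
    using linear_le_norm_imp_bounded_linear[OF F] by blast
qed

lemma convex_cone_combination:
  assumes "convex K" "k1 \<in> K" "k2 \<in> K" "0 \<le> t1" "0 \<le> t2"
  shows "\<exists>k\<in>K. (t1 + t2) *\<^sub>R (k - x) = t1 *\<^sub>R (k1 - x) + t2 *\<^sub>R (k2 - x)"
proof (cases "t1 + t2 = 0")
  case True
  then have "t1 = 0" "t2 = 0"
    using assms by linarith+
  then show ?thesis
    using assms(2) by auto
next
  case False
  then have pos: "t1 + t2 > 0"
    using assms by linarith
  define k where "k = (t1 / (t1 + t2)) *\<^sub>R k1 + (t2 / (t1 + t2)) *\<^sub>R k2"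
  have "k \<in> K"
    unfolding k_def using assms pos
    by (intro convexD) (auto simp: add_divide_distrib[symmetric])
  moreover have "(t1 + t2) *\<^sub>R k = t1 *\<^sub>R k1 + t2 *\<^sub>R k2"
    unfolding k_def using pos by (simp add: scaleR_add_right)
  then have "(t1 + t2) *\<^sub>R (k - x) = t1 *\<^sub>R (k1 - x) + t2 *\<^sub>R (k2 - x)"
    by (simp add: algebra_simps)
  ultimately show ?thesis
    by blast
qed

text \<open>It lies below the norm and is at most -d on x - K, so its linear minorants separate
  x from K with margin d.\<close>
definition separation_functional :: "'a::real_normed_vector set \<Rightarrow> 'a \<Rightarrow> real \<Rightarrow> 'a \<Rightarrow> real" where
  "separation_functional K x d v = (INF (t, k)\<in>{0..} \<times> K. norm (v + t *\<^sub>R (k - x)) - t * d)"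

context
  fixes K :: "'a::real_normed_vector set" and x :: 'a and d :: real
  assumes ne: "K \<noteq> {}" and dist_ge: "\<And>k. k \<in> K \<Longrightarrow> d \<le> norm (k - x)"
begin

lemma separation_functional_term_lower:
  assumes "0 \<le> t" "k \<in> K"
  shows "- norm v \<le> norm (v + t *\<^sub>R (k - x)) - t * d"
proof -
  have "t * d \<le> norm (t *\<^sub>R (k - x))"
    using mult_left_mono[OF dist_ge[OF assms(2)] assms(1)] assms(1) by simp
  also have "\<dots> \<le> norm (v + t *\<^sub>R (k - x)) + norm v"
    using norm_triangle_ineq4[of "v + t *\<^sub>R (k - x)" v] by simp
  finally show ?thesis
    by simp
qed

lemma separation_functional_le:
  assumes "0 \<le> t" "k \<in> K"
  shows "separation_functional K x d v \<le> norm (v + t *\<^sub>R (k - x)) - t * d"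
proof -
  have "bdd_below ((\<lambda>(t, k). norm (v + t *\<^sub>R (k - x)) - t * d) ` ({0..} \<times> K))"
    by (auto intro!: bdd_belowI2[where m = "- norm v"] separation_functional_term_lower)
  then show ?thesis
    unfolding separation_functional_def
    by (rule cINF_lower2[where x = "(t, k)"]) (use assms in auto)
qed

lemma separation_functional_greatest:
  "(\<And>t k. 0 \<le> t \<Longrightarrow> k \<in> K \<Longrightarrow> b \<le> norm (v + t *\<^sub>R (k - x)) - t * d) \<Longrightarrow> b \<le> separation_functional K x d v"
  unfolding separation_functional_def using ne by (intro cINF_greatest) auto

lemma separation_functional_le_norm: "separation_functional K x d v \<le> norm v"
  using separation_functional_le[of 0] ne by fastforce

lemma separation_functional_le_neg: "k \<in> K \<Longrightarrow> separation_functional K x d (x - k) \<le> - d"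
  using separation_functional_le[of 1 k "x - k"] by simp

lemma separation_functional_add:
  assumes "convex K"
  shows "separation_functional K x d (v + w) \<le> separation_functional K x d v + separation_functional K x d w"
    (is "?p (v + w) \<le> ?p v + ?p w")
proof -
  have bound: "?p (v + w) \<le> (norm (v + t1 *\<^sub>R (k1 - x)) - t1 * d) + (norm (w + t2 *\<^sub>R (k2 - x)) - t2 * d)"
    if tk: "0 \<le> t1" "k1 \<in> K" "0 \<le> t2" "k2 \<in> K" for t1 k1 t2 k2
  proof -
    obtain k where k: "k \<in> K" "(t1 + t2) *\<^sub>R (k - x) = t1 *\<^sub>R (k1 - x) + t2 *\<^sub>R (k2 - x)"
      using convex_cone_combination[OF assms tk(2,4,1,3)] by blast
    have "?p (v + w) \<le> norm ((v + w) + (t1 + t2) *\<^sub>R (k - x)) - (t1 + t2) * d"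
      using separation_functional_le[OF _ k(1)] tk by simp
    also have "(v + w) + (t1 + t2) *\<^sub>R (k - x) = (v + t1 *\<^sub>R (k1 - x)) + (w + t2 *\<^sub>R (k2 - x))"
      unfolding k(2) by (simp add: algebra_simps)
    finally show ?thesis
      using norm_triangle_ineq[of "v + t1 *\<^sub>R (k1 - x)" "w + t2 *\<^sub>R (k2 - x)"] by (simp add: algebra_simps)
  qed
  have "?p (v + w) - ?p v \<le> norm (w + t2 *\<^sub>R (k2 - x)) - t2 * d" if tk2: "0 \<le> t2" "k2 \<in> K" for t2 k2
  proof -
    have "?p (v + w) - (norm (w + t2 *\<^sub>R (k2 - x)) - t2 * d) \<le> ?p v"
    proof (rule separation_functional_greatest)
      fix t1 :: real and k1 assume "0 \<le> t1" "k1 \<in> K"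
      with bound[OF this tk2] show "?p (v + w) - (norm (w + t2 *\<^sub>R (k2 - x)) - t2 * d) \<le> norm (v + t1 *\<^sub>R (k1 - x)) - t1 * d"
        by linarith
    qed
    then show ?thesis
      by linarith
  qed
  then have "?p (v + w) - ?p v \<le> ?p w"
    by (rule separation_functional_greatest)
  then show ?thesis
    by simp
qed

lemma separation_functional_scaleR:
  assumes c: "0 \<le> c"
  shows "separation_functional K x d (c *\<^sub>R v) \<le> c * separation_functional K x d v"
    (is "?p (c *\<^sub>R v) \<le> c * ?p v")
proof (cases "c = 0")
  case True
  obtain k where "k \<in> K" using ne by blast
  then show ?thesis
    using True separation_functional_le[of 0 k 0] by simp
next
  case False
  have "?p (c *\<^sub>R v) / c \<le> norm (v + t *\<^sub>R (k - x)) - t * d" if "0 \<le> t" "k \<in> K" for t k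
  proof -
    have "?p (c *\<^sub>R v) \<le> norm (c *\<^sub>R v + (c * t) *\<^sub>R (k - x)) - (c * t) * d"
      using separation_functional_le[OF _ that(2)] that(1) c by simp
    also have "c *\<^sub>R v + (c * t) *\<^sub>R (k - x) = c *\<^sub>R (v + t *\<^sub>R (k - x))"
      by (simp add: scaleR_add_right)
    also have "norm \<dots> - (c * t) * d = c * (norm (v + t *\<^sub>R (k - x)) - t * d)"
      using c by (simp add: right_diff_distrib)
    finally show ?thesis
      using c False by (simp add: divide_simps mult.commute)
  qed
  then have "?p (c *\<^sub>R v) / c \<le> ?p v"
    by (rule separation_functional_greatest)
  then show ?thesis
    using c False by (simp add: divide_simps mult.commute)
qed

lemma sublinear_separation_functional:
  "convex K \<Longrightarrow> sublinear (separation_functional K x d)"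
  unfolding sublinear_def using separation_functional_add separation_functional_scaleR by blast

end

lemma separation_closed_convex:
  fixes K :: "'a::real_normed_vector set"
  assumes "closed K" "convex K" "K \<noteq> {}" "x \<notin> K"
  shows "\<exists>(F :: 'a \<Rightarrow> real) d. bounded_linear F \<and> d > 0 \<and> (\<forall>k\<in>K. F x + d \<le> F k)"
proof -
  define d where "d = infdist x K"
  have d: "d > 0"
    unfolding d_def using infdist_pos_not_in_closed assms by blast
  have dist_ge: "d \<le> norm (k - x)" if "k \<in> K" for k
    unfolding d_def using infdist_le[OF that, of x] by (simp add: dist_norm norm_minus_commute)
  have p: "sublinear (separation_functional K x d)"
    using sublinear_separation_functional[OF assms(3) dist_ge assms(2)] .
  then have "\<forall>(v, a)\<in>{0}. a \<le> separation_functional K x d v"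
    using sublinear_zero[OF p] by (simp add: zero_prod_def)
  then have "dominated_graph (separation_functional K x d) {0}"
    unfolding dominated_graph_def by simp
  then obtain F where F: "linear F" "\<And>v. F v \<le> separation_functional K x d v"
    using hahn_banach[OF p] by blast
  have "F x + d \<le> F k" if "k \<in> K" for k
  proof -
    have "F x - F k \<le> - d"
      using F(2)[of "x - k"] separation_functional_le_neg[OF assms(3) dist_ge that] linear_diff[OF F(1)]
      by simp
    then show ?thesis
      by simp
  qed
  moreover have "F v \<le> norm v" for v
    using F(2)[of v] separation_functional_le_norm[OF assms(3) dist_ge, of v] by simp
  then have "bounded_linear F"
    by (rule linear_le_norm_imp_bounded_linear(1)[OF F(1)])
  ultimately show ?thesis
    using d by (intro exI[of _ F] exI[of _ d]) simp
qed

section \<open>Weak topology\<close>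

lemma openin_weak_topology_preimage:
  fixes f :: "'a::real_normed_vector \<Rightarrow> real"
  assumes "bounded_linear f" "open U"
  shows "openin weak_topology {x. f x \<in> U}"
  unfolding weak_topology_def using assms by (intro topology_generated_by_Basis) blast

lemma topspace_weak_topology: "topspace (weak_topology :: 'a::real_normed_vector topology) = UNIV"
  using openin_weak_topology_preimage[of "\<lambda>_::'a. 0::real" UNIV] openin_subset by force

lemma continuous_map_weak_topology:
  fixes f :: "'a::real_normed_vector \<Rightarrow> real"
  assumes "bounded_linear f"
  shows "continuous_map weak_topology euclideanreal f"
  unfolding continuous_map_def topspace_weak_topology
  using openin_weak_topology_preimage[OF assms] by auto

lemma closedin_weak_topology_closed_convex:
  fixes K :: "'a::real_normed_vector set"
  assumes "closed K" "convex K"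
  shows "closedin weak_topology K"
proof (cases "K = {}")
  case False
  have "\<exists>U. openin weak_topology U \<and> x \<in> U \<and> U \<subseteq> - K" if "x \<notin> K" for x
  proof -
    obtain F :: "'a \<Rightarrow> real" and d where F: "bounded_linear F" "d > 0" "\<forall>k\<in>K. F x + d \<le> F k"
      using separation_closed_convex[OF assms False \<open>x \<notin> K\<close>] by blast
    have "openin weak_topology {y. F y \<in> {..< F x + d}}"
      using openin_weak_topology_preimage[OF F(1) open_lessThan] .
    moreover have "{y. F y \<in> {..< F x + d}} \<subseteq> - K"
      using F(3) by force
    ultimately show ?thesis
      using F(2) by force
  qed
  then have "openin weak_topology (- K)"
    by (subst openin_subopen) blast
  then show ?thesis
    unfolding closedin_def topspace_weak_topology by (simp add: Compl_eq_Diff_UNIV)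
qed simp

lemma weakly_compact_closed_convex_subset:
  assumes "weakly_compact K" "C \<subseteq> K" "closed C" "convex C"
  shows "weakly_compact C"
  using assms closedin_weak_topology_closed_convex closed_compactin
  unfolding weakly_compact_def by blast

lemma Baire_closed_cover:
  fixes E :: "nat \<Rightarrow> 'a::complete_space set"
  assumes closed: "\<And>n. closed (E n)" and cover: "(\<Union>n. E n) = UNIV"
  shows "\<exists>n. interior (E n) \<noteq> {}"
proof (rule ccontr)
  assume empty: "\<not> (\<exists>n. interior (E n) \<noteq> {})"
  have "euclidean interior_of \<Union>(range E) = {}"
  proof (rule Baire_category_alt)
    show "completely_metrizable_space (euclidean :: 'a topology) \<or>
        locally_compact_space (euclidean :: 'a topology) \<and> regular_space (euclidean :: 'a topology)"
      using completely_metrizable_space_euclidean by blast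
    show "countable (range E)"
      by simp
    fix T assume "T \<in> range E"
    then show "closedin euclidean T \<and> euclidean interior_of T = {}"
      using closed empty by (auto simp flip: closed_closedin)
  qed
  then show False
    using cover by simp
qed

lemma norm_blinfun_le_if_bounded_on_ball:
  assumes r: "r > 0" and bound: "\<And>x. x \<in> ball x0 r \<Longrightarrow> norm (blinfun_apply f x) \<le> B"
  shows "norm f \<le> 4 * B / r"
proof (rule norm_blinfun_bound)
  have "0 \<le> B"
    using bound[of x0] r by (meson centre_in_ball norm_ge_zero order_trans)
  then show "0 \<le> 4 * B / r"
    using r by simp
  fix v
  show "norm (f v) \<le> 4 * B / r * norm v"
  proof (cases "v = 0")
    case False
    define u where "u = (r / 2 / norm v) *\<^sub>R v"
    have "norm u < r"
      unfolding u_def using r False by simp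
    then have "norm (f (x0 + u)) \<le> B" "norm (f x0) \<le> B"
      using r bound by (auto simp: dist_norm)
    then have "norm (f u) \<le> 2 * B"
      using norm_triangle_ineq4[of "f (x0 + u)" "f x0"] by (simp add: blinfun.add_right)
    then have "r / 2 / norm v * norm (f v) \<le> 2 * B"
      unfolding u_def using r by (simp add: blinfun.scaleR_right)
    then show ?thesis
      using r False by (simp add: field_simps)
  qed simp
qed

theorem banach_steinhaus:
  fixes \<F> :: "('a::banach \<Rightarrow>\<^sub>L 'b::real_normed_vector) set"
  assumes pointwise: "\<And>x. bounded ((\<lambda>f. blinfun_apply f x) ` \<F>)"
  shows "bounded \<F>"
proof -
  define E where "E n = {x. \<forall>f\<in>\<F>. norm (f x) \<le> real n}" for n :: nat
  have "closed (E n)" for n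
  proof -
    have "continuous_on UNIV (\<lambda>x. norm (blinfun_apply f x))" for f
      using linear_continuous_on[OF blinfun.bounded_linear_right] by (intro continuous_intros)
    then have "closed {x. norm (blinfun_apply f x) \<le> real n}" for f
      by (intro closed_Collect_le) auto
    moreover have "E n = (\<Inter>f\<in>\<F>. {x. norm (blinfun_apply f x) \<le> real n})"
      unfolding E_def by auto
    ultimately show ?thesis
      by auto
  qed
  moreover have "x \<in> (\<Union>n. E n)" for x
  proof -
    obtain B where "\<forall>f\<in>\<F>. norm (f x) \<le> B"
      using pointwise[of x] unfolding bounded_iff by blast
    moreover obtain n where "B \<le> real n"
      using real_arch_simple by blast
    ultimately have "x \<in> E n"
      unfolding E_def by (auto intro: order_trans)
    then show ?thesis
      by blast
  qed
  ultimately obtain n x0 where "x0 \<in> interior (E n)"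
    using Baire_closed_cover[of E] by blast
  then obtain r where "r > 0" "ball x0 r \<subseteq> E n"
    by (meson mem_interior)
  then have "norm f \<le> 4 * real n / r" if "f \<in> \<F>" for f
    using that by (intro norm_blinfun_le_if_bounded_on_ball) (auto simp: E_def)
  then show ?thesis
    by (auto simp: bounded_iff)
qed

lemma weakly_compact_imp_bounded:
  fixes K :: "'a::banach set"
  assumes "weakly_compact K"
  shows "bounded K"
proof -
  define ev where "ev x = Blinfun (\<lambda>g :: 'a \<Rightarrow>\<^sub>L real. g x)" for x
  have ev: "ev x g = g x" for x g
    unfolding ev_def by (simp add: bounded_linear_Blinfun_apply blinfun.bounded_linear_left)
  have "bounded ((\<lambda>x. g x) ` K)" for g :: "'a \<Rightarrow>\<^sub>L real"
    using image_compactin[OF assms[unfolded weakly_compact_def]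
        continuous_map_weak_topology[OF blinfun.bounded_linear_right]]
    by (simp add: compact_imp_bounded)
  then have "bounded ((\<lambda>e. blinfun_apply e g) ` ev ` K)" for g
    by (simp add: image_image ev)
  then obtain B where B: "\<And>x. x \<in> K \<Longrightarrow> norm (ev x) \<le> B"
    using banach_steinhaus[of "ev ` K"] unfolding bounded_iff by blast
  have "norm x \<le> B" if "x \<in> K" for x
  proof -
    obtain F where F: "bounded_linear F" "\<forall>v. \<bar>F v\<bar> \<le> norm v" "F x = norm x"
      using norming_functional by blast
    have "norm (Blinfun F) \<le> 1"
      using F by (intro norm_blinfun_bound) (auto simp: bounded_linear_Blinfun_apply)
    then have "norm (ev x (Blinfun F)) \<le> norm (ev x)"
      using norm_blinfun[of "ev x" "Blinfun F"] norm_ge_zero[of "ev x"] mult_left_le by fastforce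
    then show ?thesis
      using B[OF that] F by (simp add: ev bounded_linear_Blinfun_apply)
  qed
  then show ?thesis
    by (auto simp: bounded_iff)
qed

section \<open>Diametral sequences\<close>

lemma bdd_above_norm_diff:
  fixes A :: "'a::real_normed_vector set"
  assumes "bounded A"
  shows "bdd_above ((\<lambda>y. norm (x - y)) ` A)"
proof -
  obtain B where "\<And>y. y \<in> A \<Longrightarrow> norm y \<le> B"
    using assms unfolding bounded_iff by blast
  then have "norm (x - y) \<le> norm x + B" if "y \<in> A" for y
    using norm_triangle_ineq4[of x y] that by fastforce
  then show ?thesis
    by (rule bdd_aboveI2)
qed

lemma less_rad_iff:
  fixes A :: "'a::real_normed_vector set"
  assumes "bounded A" "A \<noteq> {}"
  shows "r < rad x A \<longleftrightarrow> (\<exists>y\<in>A. r < norm (x - y))"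
  unfolding rad_def using less_cSUP_iff[OF assms(2) bdd_above_norm_diff[OF assms(1)]] .

lemma rad_eqI:
  fixes x :: "'a::real_normed_vector"
  assumes "A \<noteq> {}" and le: "\<And>y. y \<in> A \<Longrightarrow> norm (x - y) \<le> r"
    and approx: "\<And>e. e > 0 \<Longrightarrow> \<exists>y\<in>A. r - e < norm (x - y)"
  shows "rad x A = r"
proof (rule antisym)
  show "rad x A \<le> r"
    unfolding rad_def using assms(1) le by (rule cSUP_least)
  show "r \<le> rad x A"
  proof (rule ccontr)
    assume "\<not> r \<le> rad x A"
    then obtain y where "y \<in> A" "r - (r - rad x A) < norm (x - y)"
      using approx[of "r - rad x A"] by auto
    moreover have "bdd_above ((\<lambda>y. norm (x - y)) ` A)"
      using le by (rule bdd_aboveI2)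
    ultimately show False
      unfolding rad_def using cSUP_upper[of y A "\<lambda>y. norm (x - y)"] by simp
  qed
qed

text \<open>The sum splits as (z - w) + \<Sum> (1 - l i) (s i - w), whose weights 1 - l i are
  nonnegative and add up to n.\<close>
lemma norm_sum_diff_le_convex_combination:
  fixes s :: "nat \<Rightarrow> 'a::real_normed_vector"
  assumes near: "\<And>i. i \<le> n \<Longrightarrow> norm (s i - w) \<le> \<delta>"
    and l: "\<And>i. i \<le> n \<Longrightarrow> 0 \<le> l i" "(\<Sum>i\<le>n. l i) = 1"
  shows "norm (\<Sum>i\<le>n. s i - w) \<le> norm ((\<Sum>i\<le>n. l i *\<^sub>R s i) - w) + real n * \<delta>"
proof -
  have l_le: "l i \<le> 1" if "i \<le> n" for i
    using member_le_sum[of i "{..n}" l] l that by simp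
  have "(\<Sum>i\<le>n. l i *\<^sub>R (s i - w)) = (\<Sum>i\<le>n. l i *\<^sub>R s i) - w"
    using l(2) by (simp add: scaleR_diff_right sum_subtractf flip: scaleR_sum_left)
  moreover have "(\<Sum>i\<le>n. (1 - l i) *\<^sub>R (s i - w)) = (\<Sum>i\<le>n. s i - w) - (\<Sum>i\<le>n. l i *\<^sub>R (s i - w))"
    by (simp add: scaleR_diff_left sum_subtractf)
  ultimately have split: "(\<Sum>i\<le>n. s i - w) = ((\<Sum>i\<le>n. l i *\<^sub>R s i) - w) + (\<Sum>i\<le>n. (1 - l i) *\<^sub>R (s i - w))"
    by simp
  have "norm (\<Sum>i\<le>n. (1 - l i) *\<^sub>R (s i - w)) \<le> (\<Sum>i\<le>n. norm ((1 - l i) *\<^sub>R (s i - w)))"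
    by (rule norm_sum)
  also have "\<dots> \<le> (\<Sum>i\<le>n. (1 - l i) * \<delta>)"
    using l_le near by (intro sum_mono) (simp add: mult_left_mono)
  also have "\<dots> = real n * \<delta>"
    using l(2) by (simp add: sum_distrib_right[symmetric] sum_subtractf)
  finally show ?thesis
    unfolding split using norm_triangle_ineq order_trans add_left_mono by blast
qed

lemma convex_hull_image_atMost:
  fixes n :: nat
  assumes "z \<in> convex hull (s ` {..n})"
  shows "\<exists>l. (\<forall>i\<le>n. 0 \<le> l i) \<and> (\<Sum>i\<le>n. l i) = 1 \<and> z = (\<Sum>i\<le>n. l i *\<^sub>R s i)"
  using assms
proof (induction n arbitrary: z)
  case 0
  then show ?case
    by (intro exI[of _ "\<lambda>_. 1"]) simp
next
  case (Suc n)
  have "s ` {..Suc n} = insert (s (Suc n)) (s ` {..n})"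
    by (simp add: atMost_Suc)
  then obtain u x where ux: "0 \<le> u" "u \<le> 1" "x \<in> convex hull (s ` {..n})"
    "z = (1 - u) *\<^sub>R s (Suc n) + u *\<^sub>R x"
    using Suc.prems by (auto simp: convex_hull_insert_alt)
  obtain l where l: "\<forall>i\<le>n. 0 \<le> l i" "(\<Sum>i\<le>n. l i) = 1" "x = (\<Sum>i\<le>n. l i *\<^sub>R s i)"
    using Suc.IH[OF ux(3)] by blast
  define l' where "l' i = (if i = Suc n then 1 - u else u * l i)" for i
  have "(\<Sum>i\<le>n. l' i) = u" "(\<Sum>i\<le>n. l' i *\<^sub>R s i) = u *\<^sub>R x"
    using l by (simp_all add: l'_def sum_distrib_left[symmetric] scaleR_sum_right)
  then show ?case
    using l ux by (intro exI[of _ l']) (auto simp: l'_def le_Suc_eq)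
qed

lemma convex_hull_range_eq_Union:
  fixes s :: "nat \<Rightarrow> 'a::real_vector"
  shows "convex hull (range s) = (\<Union>n. convex hull (s ` {..n}))"
proof
  show "(\<Union>n. convex hull (s ` {..n})) \<subseteq> convex hull (range s)"
    by (intro UN_least hull_mono image_mono subset_UNIV)
  have "convex (\<Union>n. convex hull (s ` {..n}))"
  proof (rule convexI)
    fix x y and u v :: real assume "x \<in> (\<Union>n. convex hull (s ` {..n}))" "y \<in> (\<Union>n. convex hull (s ` {..n}))"
      and uv: "0 \<le> u" "0 \<le> v" "u + v = 1"
    then obtain m n where "x \<in> convex hull (s ` {..m})" "y \<in> convex hull (s ` {..n})"
      by blast
    moreover have mono: "convex hull (s ` {..k}) \<subseteq> convex hull (s ` {..max m n})" if "k \<le> max m n" for k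
      using that by (intro hull_mono image_mono) auto
    ultimately have "x \<in> convex hull (s ` {..max m n})" "y \<in> convex hull (s ` {..max m n})"
      using mono[OF max.cobounded1] mono[OF max.cobounded2] by blast+
    then show "u *\<^sub>R x + v *\<^sub>R y \<in> (\<Union>n. convex hull (s ` {..n}))"
      using uv convexD[OF convex_convex_hull] by blast
  qed
  moreover have "range s \<subseteq> (\<Union>n. convex hull (s ` {..n}))"
    by (auto intro: hull_inc)
  ultimately show "convex hull (range s) \<subseteq> (\<Union>n. convex hull (s ` {..n}))"
    by (rule hull_minimal[rotated])
qed

definition diametral_sequence :: "real \<Rightarrow> (nat \<Rightarrow> 'a::real_normed_vector) \<Rightarrow> bool" where
  "diametral_sequence \<delta> s \<longleftrightarrow>
     (\<forall>n. \<forall>z\<in>convex hull (s ` {..n}). \<delta> - \<delta> / (real n + 2) < norm (z - s (Suc n)))"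

lemma diametral_sequenceI:
  fixes s :: "nat \<Rightarrow> 'a::real_normed_vector"
  assumes near: "\<And>i j. norm (s i - s j) \<le> \<delta>"
    and far: "\<And>n. \<delta> - \<delta> / (real n + 2) / (real n + 1) < norm ((\<Sum>i\<le>n. s i) /\<^sub>R (real n + 1) - s (Suc n))"
  shows "diametral_sequence \<delta> s"
  unfolding diametral_sequence_def
proof (intro allI ballI)
  fix n z assume "z \<in> convex hull (s ` {..n})"
  then obtain l where l: "\<forall>i\<le>n. 0 \<le> l i" "(\<Sum>i\<le>n. l i) = 1" "z = (\<Sum>i\<le>n. l i *\<^sub>R s i)"
    using convex_hull_image_atMost by blast
  define y where "y = (\<Sum>i\<le>n. s i) /\<^sub>R (real n + 1)"
  have "(\<Sum>i\<le>n. s i - s (Suc n)) = (\<Sum>i\<le>n. s i) - (real n + 1) *\<^sub>R s (Suc n)"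
    by (simp add: sum_subtractf sum_constant_scaleR)
  also have "\<dots> = (real n + 1) *\<^sub>R (y - s (Suc n))"
    unfolding y_def by (simp add: scaleR_diff_right)
  finally have "norm (\<Sum>i\<le>n. s i - s (Suc n)) = (real n + 1) * norm (y - s (Suc n))"
    by simp
  moreover have "norm (\<Sum>i\<le>n. s i - s (Suc n)) \<le> norm (z - s (Suc n)) + real n * \<delta>"
    unfolding l(3)
  proof (rule norm_sum_diff_le_convex_combination)
    show "norm (s i - s (Suc n)) \<le> \<delta>" for i
      by (rule near)
    show "0 \<le> l i" if "i \<le> n" for i
      using l(1) that by blast
  qed (rule l(2))
  ultimately have "(real n + 1) * norm (y - s (Suc n)) \<le> norm (z - s (Suc n)) + real n * \<delta>"
    by simp
  moreover have "\<delta> - \<delta> / (real n + 2) / (real n + 1) < norm (y - s (Suc n))"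
    using far[of n] unfolding y_def .
  then have "(real n + 1) * (\<delta> - \<delta> / (real n + 2) / (real n + 1))
      < (real n + 1) * norm (y - s (Suc n))"
    by (rule mult_strict_left_mono) simp
  moreover have "(real n + 1) * (\<delta> - \<delta> / (real n + 2) / (real n + 1)) = real n * \<delta> + (\<delta> - \<delta> / (real n + 2))"
  proof -
    have "real n + 1 \<noteq> 0"
      by linarith
    then have cancel: "(real n + 1) * (X / (real n + 1)) = X" for X
      by simp
    show ?thesis
      unfolding right_diff_distrib cancel by (simp add: distrib_right)
  qed
  ultimately show "\<delta> - \<delta> / (real n + 2) < norm (z - s (Suc n))"
    by linarith
qed

text \<open>The sequence is built through its partial sums, since the barycentre of the first
  n + 1 terms must stay in K.\<close>
lemma far_from_barycentres_sequence_exists: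
  fixes K :: "'a::real_normed_vector set"
  assumes K: "convex K" "a \<in> K" and far: "\<And>y n. y \<in> K \<Longrightarrow> \<exists>z\<in>K. r n < norm (y - z)"
  shows "\<exists>s. range s \<subseteq> K \<and> (\<forall>n. r n < norm ((\<Sum>i\<le>n. s i) /\<^sub>R (real n + 1) - s (Suc n)))"
proof -
  have "\<exists>S. (\<forall>n. S n /\<^sub>R (real n + 1) \<in> K) \<and>
      (\<forall>n. S (Suc n) - S n \<in> K \<and> r n < norm (S n /\<^sub>R (real n + 1) - (S (Suc n) - S n)))"
  proof (rule dependent_nat_choice[where P = "\<lambda>n S. S /\<^sub>R (real n + 1) \<in> K", simplified all_conj_distrib])
    show "\<exists>S. S /\<^sub>R (real 0 + 1) \<in> K"
      using K(2) by (intro exI[of _ a]) simp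
  next
    fix S n assume S: "S /\<^sub>R (real n + 1) \<in> K"
    then obtain z where z: "z \<in> K" "r n < norm (S /\<^sub>R (real n + 1) - z)"
      using far by blast
    have "(S + z) /\<^sub>R (real (Suc n) + 1)
        = ((real n + 1) / (real n + 2)) *\<^sub>R (S /\<^sub>R (real n + 1)) + (1 / (real n + 2)) *\<^sub>R z"
      by (simp add: field_simps scaleR_add_right)
    also have "\<dots> \<in> K"
      using S z(1) by (intro convexD[OF K(1)]) (auto simp: field_simps)
    finally show "\<exists>S'. S' /\<^sub>R (real (Suc n) + 1) \<in> K \<and> S' - S \<in> K \<and>
        r n < norm (S /\<^sub>R (real n + 1) - (S' - S))"
      using z by (intro exI[of _ "S + z"]) simp
  qed
  then obtain S where SK: "\<And>n. S n /\<^sub>R (real n + 1) \<in> K" and S: "\<And>n. S (Suc n) - S n \<in> K"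
    "\<And>n. r n < norm (S n /\<^sub>R (real n + 1) - (S (Suc n) - S n))"
    by blast
  define s where "s n = (case n of 0 \<Rightarrow> S 0 | Suc m \<Rightarrow> S (Suc m) - S m)" for n
  have partial_sums: "(\<Sum>i\<le>n. s i) = S n" for n
    by (induction n) (simp_all add: s_def)
  have "range s \<subseteq> K"
    using SK[of 0] S(1) by (auto simp: s_def split: nat.split)
  moreover have "r n < norm ((\<Sum>i\<le>n. s i) /\<^sub>R (real n + 1) - s (Suc n))" for n
    using S(2)[of n] unfolding partial_sums by (simp add: s_def)
  ultimately show ?thesis
    by blast
qed

lemma diametral_sequence_exists:
  fixes K :: "'a::real_normed_vector set"
  assumes K: "convex K" "bounded K" "diameter K > 0"
    and diametral: "\<And>x. x \<in> K \<Longrightarrow> diameter K \<le> rad x K"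
  shows "\<exists>s. range s \<subseteq> K \<and> diametral_sequence (diameter K) s"
proof -
  define \<delta> where "\<delta> = diameter K"
  have ne: "K \<noteq> {}"
    using K(3) by auto
  have far: "\<exists>z\<in>K. \<delta> - \<delta> / (real n + 2) / (real n + 1) < norm (y - z)" if "y \<in> K" for y n
  proof -
    have "\<delta> / (real n + 2) / (real n + 1) > 0"
      using K(3) by (simp add: \<delta>_def)
    then have "\<delta> - \<delta> / (real n + 2) / (real n + 1) < rad y K"
      using diametral[OF that] unfolding \<delta>_def by linarith
    then show ?thesis
      using less_rad_iff[OF K(2) ne] by blast
  qed
  obtain a where "a \<in> K"
    using ne by blast
  then obtain s where s: "range s \<subseteq> K"
    "\<And>n. \<delta> - \<delta> / (real n + 2) / (real n + 1) < norm ((\<Sum>i\<le>n. s i) /\<^sub>R (real n + 1) - s (Suc n))"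
    using far_from_barycentres_sequence_exists[where r = "\<lambda>n. \<delta> - \<delta> / (real n + 2) / (real n + 1)",
        OF K(1) _ far] by blast
  have "norm (s i - s j) \<le> \<delta>" for i j
    using diameter_bounded_bound[OF K(2), of "s i" "s j"] s(1) unfolding \<delta>_def by (auto simp: dist_norm)
  then have "diametral_sequence \<delta> s"
    using s(2) by (rule diametral_sequenceI)
  then show ?thesis
    using s(1) unfolding \<delta>_def by blast
qed

lemma diametral_sequence_notin_convex_hull:
  assumes "diametral_sequence \<delta> s" "0 \<le> \<delta>"
  shows "s (Suc n) \<notin> convex hull (s ` {..n})"
proof
  assume "s (Suc n) \<in> convex hull (s ` {..n})"
  then have "\<delta> - \<delta> / (real n + 2) < norm (s (Suc n) - s (Suc n))"
    using assms(1) unfolding diametral_sequence_def by blast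
  then have "\<delta> - \<delta> / (real n + 2) < 0"
    by simp
  moreover have "\<delta> / (real n + 2) \<le> \<delta> / 1"
    using assms(2) by (intro divide_left_mono) auto
  ultimately show False
    by linarith
qed

lemma diametral_sequence_inj:
  assumes "diametral_sequence \<delta> s" "0 \<le> \<delta>"
  shows "inj s"
proof (rule linorder_injI)
  fix i j :: nat assume "i < j"
  then obtain n where n: "j = Suc n" "i \<le> n"
    by (cases j) auto
  then have "s i \<in> convex hull (s ` {..n})"
    by (intro hull_inc) simp
  then show "s i \<noteq> s j"
    using diametral_sequence_notin_convex_hull[OF assms, of n] n(1) by auto
qed

lemma diametral_sequence_far_from_tail:
  assumes s: "diametral_sequence \<delta> s" and x: "x \<in> closure (convex hull (range s))" and e: "e > 0"
  shows "\<exists>n\<ge>m. \<delta> - e < norm (x - s n)"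
proof -
  obtain z where "z \<in> convex hull (range s)" "dist z x < e / 2"
    using x e unfolding closure_approachable by (meson half_gt_zero)
  then have z: "z \<in> convex hull (range s)" "norm (x - z) < e / 2"
    by (simp_all add: dist_norm norm_minus_commute)
  then obtain N where "z \<in> convex hull (s ` {..N})"
    unfolding convex_hull_range_eq_Union by blast
  obtain k :: nat where k: "2 * \<delta> / e < k"
    using reals_Archimedean2 by blast
  define n where "n = max (max m N) k"
  have "convex hull (s ` {..N}) \<subseteq> convex hull (s ` {..n})"
    by (intro hull_mono image_mono) (simp add: n_def)
  then have "z \<in> convex hull (s ` {..n})"
    using \<open>z \<in> convex hull (s ` {..N})\<close> by blast
  then have "\<delta> - \<delta> / (real n + 2) < norm (z - s (Suc n))"
    using s unfolding diametral_sequence_def by blast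
  moreover have "\<delta> / (real n + 2) < e / 2"
  proof -
    have "e * real k \<le> e * real n"
      using e by (intro mult_left_mono) (auto simp: n_def)
    moreover have "\<delta> * 2 < e * real k"
      using k e by (simp add: divide_less_eq mult.commute)
    moreover have "e * (real n + 2) = e * real n + 2 * e"
      by (simp add: algebra_simps)
    ultimately have "\<delta> * 2 < e * (real n + 2)"
      using e by linarith
    then show ?thesis
      by (simp add: divide_simps)
  qed
  moreover have "norm (z - s (Suc n)) \<le> norm (x - s (Suc n)) + norm (x - z)"
    using norm_triangle_ineq4[of "x - s (Suc n)" "x - z"] by (simp add: norm_minus_commute)
  ultimately have "\<delta> - e < norm (x - s (Suc n))"
    using z(2) by linarith
  moreover have "m \<le> Suc n"
    by (simp add: n_def)
  ultimately show ?thesis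
    by blast
qed

section \<open>The shift map\<close>

definition shift_map :: "(nat \<Rightarrow> 'a) \<Rightarrow> 'a \<Rightarrow> 'a" where
  "shift_map s x = (if x \<in> range s then s (Suc (inv s x)) else s 0)"

lemma shift_map_apply: "inj s \<Longrightarrow> shift_map s (s n) = s (Suc n)"
  by (simp add: shift_map_def)

lemma shift_map_outside_range: "x \<notin> range s \<Longrightarrow> shift_map s x = s 0"
  by (simp add: shift_map_def)

lemma shift_map_in_range: "shift_map s x \<in> range s"
  by (simp add: shift_map_def)

lemma funpow_shift_map: "inj s \<Longrightarrow> (shift_map s ^^ k) (s m) = s (m + k)"
  by (induction k) (simp_all add: shift_map_apply)

lemma shift_map_no_fixed_point:
  assumes "inj s"
  shows "shift_map s x \<noteq> x"
proof
  assume fixed: "shift_map s x = x"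
  then have "x \<in> range s"
    using shift_map_in_range[of s x] by simp
  then obtain n where "x = s n"
    by blast
  with fixed show False
    using assms by (simp add: shift_map_apply inj_eq)
qed

lemma orbit_shift_map_subset: "orbit (shift_map s) x \<subseteq> insert x (range s)"
proof
  fix y assume "y \<in> orbit (shift_map s) x"
  then obtain k where y: "y = (shift_map s ^^ k) x"
    unfolding orbit_def by blast
  show "y \<in> insert x (range s)"
  proof (cases k)
    case 0
    then show ?thesis
      using y by simp
  next
    case (Suc j)
    then show ?thesis
      using y shift_map_in_range[of s "(shift_map s ^^ j) x"] by simp
  qed
qed

lemma orbit_shift_map_contains_tail:
  assumes "inj s"
  shows "\<exists>m. \<forall>n\<ge>m. s n \<in> orbit (shift_map s) x"
proof (cases "x \<in> range s")
  case True
  then obtain m where x: "x = s m"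
    by blast
  have "s n = (shift_map s ^^ (n - m)) x" if "m \<le> n" for n
    using funpow_shift_map[OF assms, of "n - m" m] that x by simp
  then show ?thesis
    unfolding orbit_def by blast
next
  case False
  have "s n = (shift_map s ^^ Suc n) x" for n
    using funpow_shift_map[OF assms, of n 0] shift_map_outside_range[OF False]
    by (simp add: funpow_Suc_right del: funpow.simps)
  then show ?thesis
    unfolding orbit_def by blast
qed

lemma orbitally_kannan_if_rad_orbit_eq:
  assumes "\<And>x. x \<in> K \<Longrightarrow> rad x (orbit T x) = r" and "T ` K \<subseteq> K"
    and "\<And>u v. u \<in> K \<Longrightarrow> v \<in> K \<Longrightarrow> norm (u - v) \<le> r"
  shows "orbitally_kannan K T"
  using assms by (simp add: orbitally_kannan_def image_subset_iff)

lemma diminishes_radius_of_orbits_if_rad_orbit_eq: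
  assumes "\<And>x. x \<in> K \<Longrightarrow> rad x (orbit T x) = r" and "T ` K \<subseteq> K"
  shows "diminishes_radius_of_orbits K T"
  using assms by (auto simp: diminishes_radius_of_orbits_def)

lemma not_kannan_if_midpoint_to_endpoint:
  assumes "a \<in> K" "midpoint a b \<in> K" "a \<noteq> b" "T (midpoint a b) = a" "T a = b"
  shows "\<not> kannan K T"
proof
  assume "kannan K T"
  then have "norm (T (midpoint a b) - T a) \<le> 1/2 * (norm (midpoint a b - T (midpoint a b)) + norm (a - T a))"
    using assms(1,2) unfolding kannan_def by blast
  moreover have "norm (midpoint a b - a) = norm (a - b) / 2"
    using dist_midpoint(1)[of a b] by (simp add: dist_norm norm_minus_commute)
  ultimately have "norm (a - b) \<le> 3/4 * norm (a - b)"
    using assms(4,5) by simp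
  then show False
    using assms(3) by simp
qed

lemma diametral_sequence_midpoint_notin_range:
  assumes s: "diametral_sequence \<delta> s" "0 \<le> \<delta>"
  shows "midpoint (s 0) (s 1) \<notin> range s"
proof -
  have s01: "s 0 \<noteq> s 1"
    using inj_eq[OF diametral_sequence_inj[OF s], of 0 1] by simp
  have "midpoint (s 0) (s 1) \<noteq> s j" for j
  proof (cases "j \<le> 1")
    case True
    then show ?thesis
      using s01 by (auto simp: le_Suc_eq)
  next
    case False
    then obtain n where n: "j = Suc n" "1 \<le> n"
      by (cases j) auto
    then have "midpoint (s 0) (s 1) \<in> convex hull (s ` {..n})"
      by (intro midpoints_in_convex_hull hull_inc) auto
    then show ?thesis
      using diametral_sequence_notin_convex_hull[OF s, of n] n(1) by auto
  qed
  then show ?thesis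
    by (metis rangeE)
qed

lemma rad_orbit_shift_map:
  assumes s: "diametral_sequence \<delta> s" "0 \<le> \<delta>"
    and x: "x \<in> closure (convex hull (range s))"
    and bound: "\<And>y. y \<in> closure (convex hull (range s)) \<Longrightarrow> norm (x - y) \<le> \<delta>"
  shows "rad x (orbit (shift_map s) x) = \<delta>"
proof (rule rad_eqI)
  show "orbit (shift_map s) x \<noteq> {}"
    unfolding orbit_def by simp
  show "norm (x - y) \<le> \<delta>" if y: "y \<in> orbit (shift_map s) x" for y
  proof -
    have "y \<in> insert x (range s)"
      using subsetD[OF orbit_shift_map_subset y] .
    moreover have "range s \<subseteq> closure (convex hull (range s))"
      using hull_subset[of "range s" convex] closure_subset by (rule order_trans)
    ultimately show ?thesis
      using x bound by blast
  qed
  fix e :: real assume "e > 0"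
  obtain m where "\<forall>n\<ge>m. s n \<in> orbit (shift_map s) x"
    using orbit_shift_map_contains_tail[OF diametral_sequence_inj[OF s]] by blast
  then show "\<exists>y\<in>orbit (shift_map s) x. \<delta> - e < norm (x - y)"
    using diametral_sequence_far_from_tail[OF s(1) x \<open>e > 0\<close>, of m] by blast
qed

theorem shift_map_on_closed_convex_hull:
  fixes s :: "nat \<Rightarrow> 'a::real_normed_vector"
  defines "C \<equiv> closure (convex hull (range s))"
  assumes s: "diametral_sequence \<delta> s" "0 \<le> \<delta>"
    and bound: "\<And>u v. u \<in> C \<Longrightarrow> v \<in> C \<Longrightarrow> norm (u - v) \<le> \<delta>"
  shows "nontrivial C" "convex C" "shift_map s ` C \<subseteq> C" "\<not> kannan C (shift_map s)"
    "orbitally_kannan C (shift_map s)" "diminishes_radius_of_orbits C (shift_map s)"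
    "\<not> (\<exists>x\<in>C. shift_map s x = x)"
proof -
  have inj: "inj s"
    using diametral_sequence_inj[OF s] .
  have sC: "range s \<subseteq> C"
    unfolding C_def using hull_subset[of "range s" convex] closure_subset by (rule order_trans)
  have s01: "s 0 \<noteq> s 1"
    using inj_eq[OF inj, of 0 1] by simp
  show "nontrivial C"
    unfolding nontrivial_def using sC s01 by (meson rangeI subsetD)
  show "convex C"
    unfolding C_def by (simp add: convex_closure)
  show TC: "shift_map s ` C \<subseteq> C"
    using sC shift_map_in_range[of s] by blast
  show "\<not> (\<exists>x\<in>C. shift_map s x = x)"
    using shift_map_no_fixed_point[OF inj] by blast
  have rad: "rad x (orbit (shift_map s) x) = \<delta>" if "x \<in> C" for x
    using rad_orbit_shift_map[OF s] bound that unfolding C_def by blast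
  show "orbitally_kannan C (shift_map s)"
    using rad TC bound by (rule orbitally_kannan_if_rad_orbit_eq)
  show "diminishes_radius_of_orbits C (shift_map s)"
    using rad TC by (rule diminishes_radius_of_orbits_if_rad_orbit_eq)
  have "midpoint (s 0) (s 1) \<in> C"
    using sC closure_subset[of "convex hull (range s)"] unfolding C_def
    by (intro subsetD[OF closure_subset] midpoints_in_convex_hull hull_inc) auto
  moreover have "shift_map s (midpoint (s 0) (s 1)) = s 0"
    using diametral_sequence_midpoint_notin_range[OF s] by (rule shift_map_outside_range)
  moreover have "shift_map s (s 0) = s 1"
    using shift_map_apply[OF inj, of 0] by simp
  moreover have "s 0 \<in> C"
    using sC by blast
  ultimately show "\<not> kannan C (shift_map s)"
    using not_kannan_if_midpoint_to_endpoint[OF _ _ s01] by blast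
qed

theorem corollary4p1:
  assumes "weak_quasi_normal_structure TYPE('a::banach)"
    and "\<not> weak_normal_structure TYPE('a)"
  shows "\<exists>(K :: 'a set) T. nontrivial K \<and> weakly_compact K \<and> convex K \<and> T ` K \<subseteq> K \<and>
           \<not> kannan K T \<and> orbitally_kannan K T \<and> diminishes_radius_of_orbits K T \<and>
           \<not> (\<exists>x\<in>K. T x = x)"
proof -
  obtain K K0 :: "'a set" where K: "weakly_compact K"
    and K0: "K0 \<subseteq> K" "closed K0" "convex K0" "diameter K0 > 0"
    and diametral: "\<And>x. x \<in> K0 \<Longrightarrow> diameter K0 \<le> rad x K0"
    using assms(2) unfolding weak_normal_structure_def by (auto simp: not_less)
  have bounded: "bounded K0"
    using weakly_compact_imp_bounded[OF K] K0(1) bounded_subset by blast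
  obtain s where s: "range s \<subseteq> K0" "diametral_sequence (diameter K0) s"
    using diametral_sequence_exists[OF K0(3) bounded K0(4) diametral] by blast
  define C where "C = closure (convex hull (range s))"
  have "C \<subseteq> K0"
    unfolding C_def using s(1) K0(2,3) by (intro closure_minimal hull_minimal)
  then have "weakly_compact C"
    using weakly_compact_closed_convex_subset[OF K] K0(1) unfolding C_def
    by (simp add: convex_closure)
  moreover have "norm (u - v) \<le> diameter K0" if "u \<in> C" "v \<in> C" for u v
    using diameter_bounded_bound[OF bounded, of u v] \<open>C \<subseteq> K0\<close> that by (auto simp: dist_norm)
  then have "nontrivial C \<and> convex C \<and> shift_map s ` C \<subseteq> C \<and> \<not> kannan C (shift_map s) \<and>
      orbitally_kannan C (shift_map s) \<and> diminishes_radius_of_orbits C (shift_map s) \<and>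
      \<not> (\<exists>x\<in>C. shift_map s x = x)"
    using shift_map_on_closed_convex_hull[OF s(2) less_imp_le[OF K0(4)], folded C_def] by blast
  ultimately show ?thesis
    by blast
qed

end
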